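(* Let $X=X(\Sigma)$ be an $n$-dimensional complete simplicial toric variety with homogeneous coordinate ring $S=\mathbb C[x_1,\dots,x_r]$, and let $z_0,\dots,z_n$ be monomials with $z_0\cdots z_n=x_1\cdots x_r$. Let $Z_i\subset X$ be the zero locus of $z_i$. Then $Z_1\cap\dots\cap Z_n$ is a finite set, consisting of the torus-fixed points $O_\sigma$ for the maximal cones $\sigma$ of $\Sigma$ that contain a ray $\rho_j$ with $x_j\mid z_i$ for each $i=1,\dots,n$.
   Context: $\Sigma$ is a complete simplicial fan in $N_\mathbb R$ with rays $\rho_1,\dots,\rho_r$; the variable $x_j$ corresponds to $\rho_j$ and its zero locus on $X$ is the torus-invariant prime divisor $D_j$. $O_\sigma$ denotes the torus orbit corresponding to a cone $\sigma$ (a fixed point when $\sigma$ is maximal). Since $z_0\cdots z_n=x_1\cdots x_r$, each variable divides exactly one $z_i$. *)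

theory Defs
  imports "HOL-Analysis.Analysis"
begin

text \<open>Lattice N = Z^n is modelled as int^'n, its real span as real^'n.
 Rays rho_1..rho_r have primitive generators u 1, ..., u r.
 A simplicial fan is given by its cones, each cone being the set of indices of its rays.\<close>

definition rvec :: "int^'n \<Rightarrow> real^'n" where
  "rvec v = (\<chi> i. real_of_int (v$i))"

definition cone_gen :: "(nat \<Rightarrow> int^'n) \<Rightarrow> nat set \<Rightarrow> (real^'n) set" where
  "cone_gen u \<sigma> = {v. \<exists>c. (\<forall>j\<in>\<sigma>. c j \<ge> 0) \<and> v = (\<Sum>j\<in>\<sigma>. c j *\<^sub>R rvec (u j))}"

definition primitive :: "int^'n \<Rightarrow> bool" where
  "primitive v \<longleftrightarrow> (\<forall>(k::int) w. v = k *s w \<longrightarrow> \<bar>k\<bar> = 1)"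

definition complete_simplicial_fan :: "nat \<Rightarrow> (nat \<Rightarrow> int^'n) \<Rightarrow> nat set set \<Rightarrow> bool" where
  "complete_simplicial_fan r u \<Sigma> \<longleftrightarrow>
     (\<forall>j\<in>{1..r}. primitive (u j)) \<and> inj_on u {1..r} \<and>
     (\<forall>j\<in>{1..r}. {j} \<in> \<Sigma>) \<and>
     (\<forall>\<sigma>\<in>\<Sigma>. \<sigma> \<subseteq> {1..r} \<and> independent (rvec ` u ` \<sigma>)) \<and>
     (\<forall>\<sigma>\<in>\<Sigma>. \<forall>\<tau>. \<tau> \<subseteq> \<sigma> \<longrightarrow> \<tau> \<in> \<Sigma>) \<and>
     (\<forall>\<sigma>\<in>\<Sigma>. \<forall>\<tau>\<in>\<Sigma>. cone_gen u \<sigma> \<inter> cone_gen u \<tau> = cone_gen u (\<sigma> \<inter> \<tau>)) \<and>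
     (\<Union>\<sigma>\<in>\<Sigma>. cone_gen u \<sigma>) = UNIV"

definition maximal_cone :: "nat set set \<Rightarrow> nat set \<Rightarrow> bool" where
  "maximal_cone \<Sigma> \<sigma> \<longleftrightarrow> \<sigma> \<in> \<Sigma> \<and> (\<forall>\<tau>\<in>\<Sigma>. \<sigma> \<subseteq> \<tau> \<longrightarrow> \<tau> = \<sigma>)"

text \<open>Cox construction: X = (C^r - Z(Sigma)) / G.\<close>

definition dotp :: "int^'n \<Rightarrow> int^'n \<Rightarrow> int" where
  "dotp m v = (\<Sum>i\<in>UNIV. m$i * v$i)"

definition cox_group :: "nat \<Rightarrow> (nat \<Rightarrow> int^'n) \<Rightarrow> (nat \<Rightarrow> complex) set" where
  "cox_group r u = {t. (\<forall>j\<in>{1..r}. t j \<noteq> 0) \<and> (\<forall>j. j \<notin> {1..r} \<longrightarrow> t j = 1) \<and>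
      (\<forall>m::int^'n. (\<Prod>j\<in>{1..r}. t j powi dotp m (u j)) = 1)}"

definition cox_open :: "nat \<Rightarrow> nat set set \<Rightarrow> (nat \<Rightarrow> complex) set" where
  "cox_open r \<Sigma> = {x. (\<forall>j. j \<notin> {1..r} \<longrightarrow> x j = 0) \<and> (\<exists>\<sigma>\<in>\<Sigma>. \<forall>j\<in>{1..r} - \<sigma>. x j \<noteq> 0)}"

definition cox_rel :: "nat \<Rightarrow> (nat \<Rightarrow> int^'n) \<Rightarrow> ((nat \<Rightarrow> complex) \<times> (nat \<Rightarrow> complex)) set" where
  "cox_rel r u = {(x, y). \<exists>t\<in>cox_group r u. y = (\<lambda>j. t j * x j)}"

definition toric_variety :: "nat \<Rightarrow> (nat \<Rightarrow> int^'n) \<Rightarrow> nat set set \<Rightarrow> (nat \<Rightarrow> complex) set set" where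
  "toric_variety r u \<Sigma> = cox_open r \<Sigma> // cox_rel r u"

text \<open>Monomial x_1^(a 1) ... x_r^(a r), given by its exponent vector.\<close>
definition monomial_eval :: "nat \<Rightarrow> (nat \<Rightarrow> nat) \<Rightarrow> (nat \<Rightarrow> complex) \<Rightarrow> complex" where
  "monomial_eval r a x = (\<Prod>j\<in>{1..r}. x j ^ a j)"

definition zero_locus :: "nat \<Rightarrow> (nat \<Rightarrow> int^'n) \<Rightarrow> nat set set \<Rightarrow> (nat \<Rightarrow> nat) \<Rightarrow> (nat \<Rightarrow> complex) set set" where
  "zero_locus r u \<Sigma> a = {p \<in> toric_variety r u \<Sigma>. \<exists>x\<in>p. monomial_eval r a x = 0}"

definition torus_orbit :: "nat \<Rightarrow> (nat \<Rightarrow> int^'n) \<Rightarrow> nat set set \<Rightarrow> nat set \<Rightarrow> (nat \<Rightarrow> complex) set set" where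
  "torus_orbit r u \<Sigma> \<sigma> = {p \<in> toric_variety r u \<Sigma>. \<exists>x\<in>p. \<forall>j\<in>{1..r}. x j = 0 \<longleftrightarrow> j \<in> \<sigma>}"

end

theory Submission
  imports Defs
begin

text \<open>
  A point of X lies on Z_i exactly when a representative has a vanishing coordinate x_j
  with x_j dividing z_i. Since z_0 ... z_n = x_1 ... x_r, the z_i have disjoint supports,
  so a point lying on every Z_i, i = 1..n, has at least n vanishing coordinates. These
  index a cone of the fan (that is what removing Z(Sigma) from C^r ensures), and a
  simplicial cone has at most n rays; so the cone has exactly n rays and is maximal.

  Conversely every maximal cone sigma is n-dimensional: the finitely many closed cones not
  containing v = sum of the generators of sigma keep away from a ball around v, so by
  completeness a point v + e w with w outside the span of sigma lies in a cone containing v.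
  That cone contains sigma, hence equals it, which puts w in the span of sigma.

  Finally O_sigma is a single point for maximal sigma: the generators of sigma are a basis,
  so for two points with zero set sigma the required element of G can be written as exp
  of a vector nu, with nu = log (y/x) off sigma and nu on sigma solved for linearly.
\<close>

lemma convex_cone_hull_finite_image:
  fixes g :: "'i \<Rightarrow> 'a::real_vector"
  assumes "finite \<sigma>"
  shows "convex_cone hull (g ` \<sigma>) = {v. \<exists>c. (\<forall>j\<in>\<sigma>. 0 \<le> c j) \<and> v = (\<Sum>j\<in>\<sigma>. c j *\<^sub>R g j)}"
    (is "_ = ?C")
proof
  have "(\<Sum>j\<in>A. c j *\<^sub>R g j) \<in> convex_cone hull (g ` \<sigma>)"
    if "finite A" "A \<subseteq> \<sigma>" "\<forall>j\<in>A. 0 \<le> c j" for A c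
    using that
  proof (induction A rule: finite_induct)
    case empty
    then show ?case by (simp add: convex_cone_hull_contains_0)
  next
    case (insert j A)
    then show ?case by (simp add: convex_cone_hull_add convex_cone_hull_mul hull_inc)
  qed
  then show "?C \<subseteq> convex_cone hull (g ` \<sigma>)" using assms by blast
next
  show "convex_cone hull (g ` \<sigma>) \<subseteq> ?C"
  proof (rule hull_minimal)
    show "g ` \<sigma> \<subseteq> ?C"
    proof (rule image_subsetI)
      fix i assume "i \<in> \<sigma>"
      have "(\<Sum>j\<in>\<sigma>. (if j = i then 1 else 0) *\<^sub>R g j) = (\<Sum>j\<in>\<sigma>. if j = i then g j else 0)"
        by (rule sum.cong) auto
      also have "\<dots> = g i"
        using assms \<open>i \<in> \<sigma>\<close> by simp
      finally show "g i \<in> ?C"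
        by (intro CollectI exI[of _ "\<lambda>j. if j = i then 1 else 0"] conjI) simp_all
    qed
    have zero: "0 \<in> ?C"
      by (intro CollectI exI[of _ "\<lambda>_. 0"] conjI) simp_all
    have add: "x + y \<in> ?C" if "x \<in> ?C" "y \<in> ?C" for x y
    proof -
      from that(1) obtain c where "\<forall>j\<in>\<sigma>. 0 \<le> c j" "x = (\<Sum>j\<in>\<sigma>. c j *\<^sub>R g j)"
        by blast
      moreover from that(2) obtain d where "\<forall>j\<in>\<sigma>. 0 \<le> d j" "y = (\<Sum>j\<in>\<sigma>. d j *\<^sub>R g j)"
        by blast
      ultimately have h: "(\<forall>j\<in>\<sigma>. 0 \<le> c j + d j) \<and> x + y = (\<Sum>j\<in>\<sigma>. (c j + d j) *\<^sub>R g j)"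
        by (simp add: scaleR_add_left sum.distrib)
      show ?thesis
        unfolding mem_Collect_eq by (rule exI[of _ "\<lambda>j. c j + d j"], rule h)
    qed
    have mul: "a *\<^sub>R x \<in> ?C" if "x \<in> ?C" "0 \<le> a" for x a
    proof -
      from that(1) obtain c where "\<forall>j\<in>\<sigma>. 0 \<le> c j" "x = (\<Sum>j\<in>\<sigma>. c j *\<^sub>R g j)"
        by blast
      then have h: "(\<forall>j\<in>\<sigma>. 0 \<le> a * c j) \<and> a *\<^sub>R x = (\<Sum>j\<in>\<sigma>. (a * c j) *\<^sub>R g j)"
        using that(2) by (simp add: scaleR_sum_right)
      show ?thesis
        unfolding mem_Collect_eq by (rule exI[of _ "\<lambda>j. a * c j"], rule h)
    qed
    show "convex_cone ?C"
      unfolding convex_cone_iff by (intro conjI ballI allI impI zero add mul)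
  qed
qed

lemma closed_cone_gen: "finite \<sigma> \<Longrightarrow> closed (cone_gen u \<sigma>)"
  using closed_convex_cone_hull[of "(\<lambda>j. rvec (u j)) ` \<sigma>"]
  by (simp add: cone_gen_def convex_cone_hull_finite_image)

lemma cone_gen_subset_span: "cone_gen u \<sigma> \<subseteq> span ((\<lambda>j. rvec (u j)) ` \<sigma>)"
proof
  fix v assume "v \<in> cone_gen u \<sigma>"
  then obtain c where "v = (\<Sum>j\<in>\<sigma>. c j *\<^sub>R rvec (u j))"
    unfolding cone_gen_def by blast
  then show "v \<in> span ((\<lambda>j. rvec (u j)) ` \<sigma>)"
    by (simp add: span_sum span_scale span_base imageI)
qed

lemma rvec_inj: "rvec v = rvec w \<Longrightarrow> v = w"
  by (simp add: rvec_def vec_eq_iff)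

lemma inverse_in_cox_group:
  fixes u :: "nat \<Rightarrow> int^'n"
  assumes "t \<in> cox_group r u"
  shows "(\<lambda>j. inverse (t j)) \<in> cox_group r u"
proof -
  have "(\<Prod>j\<in>{1..r}. inverse (t j) powi dotp m (u j)) = inverse (\<Prod>j\<in>{1..r}. t j powi dotp m (u j))"
    for m :: "int^'n"
    using prod_inversef[of "\<lambda>j. t j powi dotp m (u j)" "{1..r}"]
    by (simp add: power_int_inverse comp_def)
  then show ?thesis using assms by (simp add: cox_group_def)
qed

lemma mult_in_cox_group:
  "s \<in> cox_group r u \<Longrightarrow> t \<in> cox_group r u \<Longrightarrow> (\<lambda>j. s j * t j) \<in> cox_group r u"
  by (auto simp: cox_group_def power_int_mult_distrib prod.distrib)

lemma exp_in_cox_group: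
  fixes u :: "nat \<Rightarrow> int^'n" and \<nu> :: "nat \<Rightarrow> complex"
  assumes "\<And>k. (\<Sum>j\<in>{1..r}. of_int (u j $ k) * \<nu> j) = 0"
  shows "(\<lambda>j. if j \<in> {1..r} then exp (\<nu> j) else 1) \<in> cox_group r u"
proof -
  have "(\<Prod>j\<in>{1..r}. (if j \<in> {1..r} then exp (\<nu> j) else 1) powi dotp m (u j)) = 1"
    for m :: "int^'n"
  proof -
    have "(\<Prod>j\<in>{1..r}. (if j \<in> {1..r} then exp (\<nu> j) else 1) powi dotp m (u j))
        = exp (\<Sum>j\<in>{1..r}. of_int (dotp m (u j)) * \<nu> j)"
      by (simp add: exp_sum exp_power_int)
    also have "(\<Sum>j\<in>{1..r}. of_int (dotp m (u j)) * \<nu> j)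
        = (\<Sum>j\<in>{1..r}. \<Sum>k\<in>UNIV. of_int (m $ k) * (of_int (u j $ k) * \<nu> j))"
      by (simp add: dotp_def sum_distrib_left sum_distrib_right mult_ac)
    also have "\<dots> = (\<Sum>k\<in>UNIV. of_int (m $ k) * (\<Sum>j\<in>{1..r}. of_int (u j $ k) * \<nu> j))"
      by (simp only: sum_distrib_left) (rule sum.swap)
    also have "\<dots> = 0" by (simp only: assms mult_zero_right sum.neutral_const)
    finally show ?thesis by simp
  qed
  then show ?thesis by (simp add: cox_group_def)
qed

lemma equiv_cox_rel: "equiv UNIV (cox_rel r u)"
proof (rule equivI)
  have "(\<lambda>j. 1) \<in> cox_group r u" by (simp add: cox_group_def)
  then show "refl (cox_rel r u)"
    unfolding refl_on_def cox_rel_def by fastforce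
  show "sym (cox_rel r u)"
  proof (rule symI)
    fix x y assume "(x, y) \<in> cox_rel r u"
    then obtain t where t: "t \<in> cox_group r u" and y: "y = (\<lambda>j. t j * x j)"
      unfolding cox_rel_def by auto
    have "x = (\<lambda>j. inverse (t j) * y j)"
    proof
      fix j show "x j = inverse (t j) * y j"
        using t y by (cases "j \<in> {1..r}") (auto simp: cox_group_def)
    qed
    then show "(y, x) \<in> cox_rel r u"
      using inverse_in_cox_group[OF t] unfolding cox_rel_def
      by (auto intro!: bexI[of _ "\<lambda>j. inverse (t j)"])
  qed
  show "trans (cox_rel r u)"
  proof (rule transI)
    fix x y w assume "(x, y) \<in> cox_rel r u" "(y, w) \<in> cox_rel r u"
    then obtain s t where "t \<in> cox_group r u" "y = (\<lambda>j. t j * x j)"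
      and "s \<in> cox_group r u" "w = (\<lambda>j. s j * y j)"
      unfolding cox_rel_def by auto
    then show "(x, w) \<in> cox_rel r u"
      using mult_in_cox_group unfolding cox_rel_def
      by (auto simp: mult.assoc intro!: bexI[of _ "\<lambda>j. s j * t j"])
  qed
qed simp

lemma cox_rel_zero_iff:
  "(x, y) \<in> cox_rel r u \<Longrightarrow> j \<in> {1..r} \<Longrightarrow> y j = 0 \<longleftrightarrow> x j = 0"
  by (auto simp: cox_rel_def cox_group_def)

lemma cox_rel_outside:
  "(x, y) \<in> cox_rel r u \<Longrightarrow> j \<notin> {1..r} \<Longrightarrow> y j = x j"
  by (auto simp: cox_rel_def cox_group_def)

lemma cox_open_cox_rel:
  assumes "(x, y) \<in> cox_rel r u" "x \<in> cox_open r \<Sigma>"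
  shows "y \<in> cox_open r \<Sigma>"
proof -
  obtain \<sigma> where "\<sigma> \<in> \<Sigma>" "\<forall>j\<in>{1..r} - \<sigma>. x j \<noteq> 0"
    using assms(2) unfolding cox_open_def by blast
  moreover have "\<forall>j. j \<notin> {1..r} \<longrightarrow> y j = 0"
    using assms(2) cox_rel_outside[OF assms(1)] unfolding cox_open_def by simp
  ultimately show ?thesis
    using cox_rel_zero_iff[OF assms(1)] unfolding cox_open_def by auto
qed

lemma toric_variety_class:
  assumes "p \<in> toric_variety r u \<Sigma>" "x \<in> p"
  shows "x \<in> cox_open r \<Sigma>" "p = cox_rel r u `` {x}"
proof -
  obtain y where y: "y \<in> cox_open r \<Sigma>" "p = cox_rel r u `` {y}"
    using assms(1) unfolding toric_variety_def by (rule quotientE)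
  then have yx: "(y, x) \<in> cox_rel r u" using assms(2) by simp
  show "x \<in> cox_open r \<Sigma>" using cox_open_cox_rel[OF yx y(1)] .
  show "p = cox_rel r u `` {x}" using y(2) equiv_class_eq[OF equiv_cox_rel yx] by simp
qed

lemma monomial_eval_eq_0_iff:
  "monomial_eval r a x = 0 \<longleftrightarrow> (\<exists>j\<in>{1..r}. a j \<noteq> 0 \<and> x j = 0)"
  by (auto simp: monomial_eval_def)

lemma zero_locus_iff:
  assumes "p \<in> toric_variety r u \<Sigma>" "x \<in> p"
  shows "p \<in> zero_locus r u \<Sigma> a \<longleftrightarrow> (\<exists>j\<in>{1..r}. a j \<noteq> 0 \<and> x j = 0)"
proof -
  have "(x, y) \<in> cox_rel r u" if "y \<in> p" for y
    using that toric_variety_class(2)[OF assms] by simp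
  then show ?thesis
    using assms cox_rel_zero_iff unfolding zero_locus_def monomial_eval_eq_0_iff by blast
qed

lemma torus_orbit_subset_zero_locus:
  assumes "\<sigma> \<subseteq> {1..r}" "j \<in> \<sigma>" "a j \<noteq> 0"
  shows "torus_orbit r u \<Sigma> \<sigma> \<subseteq> zero_locus r u \<Sigma> a"
  using assms unfolding torus_orbit_def zero_locus_def monomial_eval_eq_0_iff by blast

lemma card_le_card_if_disjoint_hits:
  assumes "finite Z" and hit: "\<forall>i\<in>I. \<exists>j\<in>Z. P i j"
    and disj: "\<And>i i' j. i \<in> I \<Longrightarrow> i' \<in> I \<Longrightarrow> j \<in> Z \<Longrightarrow> P i j \<Longrightarrow> P i' j \<Longrightarrow> i = i'"
  shows "card I \<le> card Z"
proof -
  obtain f where f: "\<And>i. i \<in> I \<Longrightarrow> f i \<in> Z \<and> P i (f i)"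
    using hit by metis
  have "inj_on f I" by (rule inj_onI) (metis f disj)
  then show ?thesis using f by (intro card_inj_on_le[OF _ _ \<open>finite Z\<close>]) auto
qed

lemma exponent_supports_disjoint:
  fixes z :: "nat \<Rightarrow> nat \<Rightarrow> nat"
  assumes "(\<Sum>i\<in>I. z i j) = 1" "finite I" "i \<in> I" "i' \<in> I" "z i j \<noteq> 0" "z i' j \<noteq> 0"
  shows "i = i'"
proof (rule ccontr)
  assume "i \<noteq> i'"
  then have "z i j + z i' j = (\<Sum>k\<in>{i, i'}. z k j)" by simp
  also have "\<dots> \<le> (\<Sum>k\<in>I. z k j)"
    using assms(2-4) by (intro sum_mono2) auto
  finally show False using assms(1,5,6) by simp
qed

locale complete_fan =
  fixes r :: nat and u :: "nat \<Rightarrow> int^'n" and \<Sigma> :: "nat set set"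
  assumes fan: "complete_simplicial_fan r u \<Sigma>"
begin

abbreviation gen :: "nat \<Rightarrow> real^'n" where
  "gen j \<equiv> rvec (u j)"

lemma cones_independent: "\<forall>\<sigma>\<in>\<Sigma>. \<sigma> \<subseteq> {1..r} \<and> independent (rvec ` u ` \<sigma>)"
  using fan unfolding complete_simplicial_fan_def by (elim conjE)

lemma faces_in_fan: "\<forall>\<sigma>\<in>\<Sigma>. \<forall>\<tau>. \<tau> \<subseteq> \<sigma> \<longrightarrow> \<tau> \<in> \<Sigma>"
  using fan unfolding complete_simplicial_fan_def by (elim conjE)

lemma cone_gen_Int_cone_gen:
  "\<forall>\<sigma>\<in>\<Sigma>. \<forall>\<tau>\<in>\<Sigma>. cone_gen u \<sigma> \<inter> cone_gen u \<tau> = cone_gen u (\<sigma> \<inter> \<tau>)"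
  using fan unfolding complete_simplicial_fan_def by (elim conjE)

lemma Union_cone_gen: "(\<Union>\<sigma>\<in>\<Sigma>. cone_gen u \<sigma>) = UNIV"
  using fan unfolding complete_simplicial_fan_def by (elim conjE)

lemma inj_on_u: "inj_on u {1..r}"
  using fan unfolding complete_simplicial_fan_def by (elim conjE)

lemma cone_subset: "\<sigma> \<in> \<Sigma> \<Longrightarrow> \<sigma> \<subseteq> {1..r}"
  using cones_independent by blast

lemma independent_gen: "\<sigma> \<in> \<Sigma> \<Longrightarrow> independent (gen ` \<sigma>)"
  using cones_independent by (simp add: image_image)

lemma finite_cone: "\<sigma> \<in> \<Sigma> \<Longrightarrow> finite \<sigma>"
  using cone_subset finite_subset by blast

lemma finite_fan: "finite \<Sigma>"
proof (rule finite_subset)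
  show "\<Sigma> \<subseteq> Pow {1..r}" using cone_subset by blast
qed simp

lemma face_in_fan: "\<sigma> \<in> \<Sigma> \<Longrightarrow> \<tau> \<subseteq> \<sigma> \<Longrightarrow> \<tau> \<in> \<Sigma>"
  using faces_in_fan by blast

lemma cone_gen_Int: "\<sigma> \<in> \<Sigma> \<Longrightarrow> \<tau> \<in> \<Sigma> \<Longrightarrow> cone_gen u \<sigma> \<inter> cone_gen u \<tau> = cone_gen u (\<sigma> \<inter> \<tau>)"
  using cone_gen_Int_cone_gen by blast

lemma fan_covers: "\<exists>\<tau>\<in>\<Sigma>. v \<in> cone_gen u \<tau>"
  using Union_cone_gen by blast

lemma inj_on_gen: "\<sigma> \<in> \<Sigma> \<Longrightarrow> inj_on gen \<sigma>"
  using inj_on_u cone_subset rvec_inj unfolding inj_on_def by (meson subsetD)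

lemma gen_coeffs_unique:
  assumes "\<sigma> \<in> \<Sigma>" "(\<Sum>j\<in>\<sigma>. c j *\<^sub>R gen j) = (\<Sum>j\<in>\<sigma>. d j *\<^sub>R gen j)" "j \<in> \<sigma>"
  shows "c j = d j"
proof (rule ccontr)
  assume "c j \<noteq> d j"
  have inj: "inj_on gen \<sigma>" using inj_on_gen[OF assms(1)] .
  define e where "e v = c (inv_into \<sigma> gen v) - d (inv_into \<sigma> gen v)" for v
  have "(\<Sum>v\<in>gen ` \<sigma>. e v *\<^sub>R v) = (\<Sum>j\<in>\<sigma>. (c j - d j) *\<^sub>R gen j)"
    by (simp add: sum.reindex[OF inj] e_def inv_into_f_f[OF inj])
  also have "\<dots> = 0"
    using assms(2) by (simp add: scaleR_diff_left sum_subtractf)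
  finally have "(\<Sum>v\<in>gen ` \<sigma>. e v *\<^sub>R v) = 0" .
  moreover have "e (gen j) \<noteq> 0"
    using \<open>c j \<noteq> d j\<close> assms(3) by (simp add: e_def inv_into_f_f[OF inj])
  ultimately have "dependent (gen ` \<sigma>)"
    using assms(3) finite_cone[OF assms(1)] by (subst dependent_finite) auto
  then show False using independent_gen[OF assms(1)] by simp
qed

lemma card_cone_le: "\<sigma> \<in> \<Sigma> \<Longrightarrow> card \<sigma> \<le> CARD('n)"
  using independent_card_le[OF independent_gen] card_image[OF inj_on_gen] by (simp add: DIM_cart)

lemma span_gen_full_cone:
  assumes "\<sigma> \<in> \<Sigma>" "card \<sigma> = CARD('n)"
  shows "span (gen ` \<sigma>) = UNIV"
proof -
  have "dim (UNIV :: (real^'n) set) \<le> card (gen ` \<sigma>)"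
    using card_image[OF inj_on_gen[OF assms(1)]] assms(2) by (simp add: dim_UNIV DIM_cart)
  then have "UNIV \<subseteq> span (gen ` \<sigma>)"
    using card_ge_dim_independent[OF _ independent_gen[OF assms(1)]] by blast
  then show ?thesis by blast
qed

lemma maximal_cone_if_card:
  assumes "\<sigma> \<in> \<Sigma>" "CARD('n) \<le> card \<sigma>"
  shows "maximal_cone \<Sigma> \<sigma>"
  unfolding maximal_cone_def
proof (intro conjI ballI impI)
  fix \<tau> assume "\<tau> \<in> \<Sigma>" "\<sigma> \<subseteq> \<tau>"
  moreover from this have "card \<tau> \<le> card \<sigma>"
    using assms(2) card_cone_le by (meson order.trans)
  ultimately show "\<tau> = \<sigma>"
    using card_seteq finite_cone by blast
qed (rule assms(1))

lemma subset_if_sum_gen_in_cone: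
  assumes "\<sigma> \<in> \<Sigma>" "\<tau> \<in> \<Sigma>" "(\<Sum>j\<in>\<sigma>. gen j) \<in> cone_gen u \<tau>"
  shows "\<sigma> \<subseteq> \<tau>"
proof
  fix j assume "j \<in> \<sigma>"
  have "(\<Sum>j\<in>\<sigma>. gen j) \<in> cone_gen u \<sigma>"
    unfolding cone_gen_def by (auto intro!: exI[of _ "\<lambda>_. 1"])
  then have "(\<Sum>j\<in>\<sigma>. gen j) \<in> cone_gen u (\<sigma> \<inter> \<tau>)"
    using assms cone_gen_Int by blast
  then obtain d where "(\<Sum>j\<in>\<sigma>. gen j) = (\<Sum>j\<in>\<sigma> \<inter> \<tau>. d j *\<^sub>R gen j)"
    unfolding cone_gen_def by blast
  also have "\<dots> = (\<Sum>j\<in>\<sigma>. if j \<in> \<tau> then d j *\<^sub>R gen j else 0)"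
    by (simp add: sum.inter_restrict[OF finite_cone[OF assms(1)]])
  also have "\<dots> = (\<Sum>j\<in>\<sigma>. (if j \<in> \<tau> then d j else 0) *\<^sub>R gen j)"
    by (rule sum.cong) auto
  finally have "(\<Sum>j\<in>\<sigma>. 1 *\<^sub>R gen j) = (\<Sum>j\<in>\<sigma>. (if j \<in> \<tau> then d j else 0) *\<^sub>R gen j)"
    by simp
  from gen_coeffs_unique[OF assms(1) this \<open>j \<in> \<sigma>\<close>] show "j \<in> \<tau>"
    by (auto split: if_splits)
qed

lemma gen_coeffs_exist:
  assumes "\<sigma> \<in> \<Sigma>" "card \<sigma> = CARD('n)"
  obtains c where "v = (\<Sum>j\<in>\<sigma>. c j *\<^sub>R gen j)"
proof -
  have "v \<in> span (gen ` \<sigma>)" using span_gen_full_cone[OF assms] by simp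
  then obtain g where "v = (\<Sum>w\<in>gen ` \<sigma>. g w *\<^sub>R w)"
    using span_finite[of "gen ` \<sigma>"] finite_cone[OF assms(1)] by auto
  also have "\<dots> = (\<Sum>j\<in>\<sigma>. g (gen j) *\<^sub>R gen j)"
    by (rule sum.reindex[OF inj_on_gen[OF assms(1)], unfolded comp_def])
  finally show ?thesis by (rule that)
qed

lemma card_maximal_cone:
  assumes "maximal_cone \<Sigma> \<sigma>"
  shows "card \<sigma> = CARD('n)"
proof (rule ccontr)
  assume card: "card \<sigma> \<noteq> CARD('n)"
  have \<sigma>: "\<sigma> \<in> \<Sigma>" using assms by (simp add: maximal_cone_def)
  have "span (gen ` \<sigma>) \<noteq> UNIV"
  proof
    assume "span (gen ` \<sigma>) = UNIV"
    then have "dim (span (gen ` \<sigma>)) = CARD('n)" by (simp add: dim_UNIV DIM_cart)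
    moreover have "dim (span (gen ` \<sigma>)) = card \<sigma>"
      using dim_span dim_eq_card_independent[OF independent_gen[OF \<sigma>]]
        card_image[OF inj_on_gen[OF \<sigma>]] by simp
    ultimately show False using card by simp
  qed
  then obtain w where w: "w \<notin> span (gen ` \<sigma>)" by blast
  then have "w \<noteq> 0" using span_zero by auto
  define v where "v = (\<Sum>j\<in>\<sigma>. gen j)"
  define F where "F = (\<Union>\<tau>\<in>{\<tau> \<in> \<Sigma>. v \<notin> cone_gen u \<tau>}. cone_gen u \<tau>)"
  have "open (- F)"
    unfolding F_def using finite_fan finite_cone closed_cone_gen
    by (intro open_Compl closed_UN) auto
  moreover have "v \<in> - F" unfolding F_def by blast
  ultimately obtain e where "e > 0" and e: "ball v e \<subseteq> - F"
    unfolding open_contains_ball by blast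
  define q where "q = v + (e / (2 * norm w)) *\<^sub>R w"
  have "dist v q = e / 2"
    using \<open>w \<noteq> 0\<close> \<open>e > 0\<close> by (simp add: q_def dist_norm)
  then have "q \<in> ball v e" using \<open>e > 0\<close> by simp
  then have "q \<notin> F" using e by blast
  obtain \<tau> where \<tau>: "\<tau> \<in> \<Sigma>" "q \<in> cone_gen u \<tau>" using fan_covers by blast
  with \<open>q \<notin> F\<close> have "v \<in> cone_gen u \<tau>" unfolding F_def by blast
  then have "\<sigma> \<subseteq> \<tau>" using subset_if_sum_gen_in_cone \<sigma> \<tau>(1) v_def by blast
  then have "\<tau> = \<sigma>" using assms \<tau>(1) by (simp add: maximal_cone_def)
  then have "q \<in> span (gen ` \<sigma>)" using \<tau>(2) cone_gen_subset_span by blast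
  moreover have "v \<in> span (gen ` \<sigma>)" unfolding v_def by (intro span_sum span_base imageI)
  ultimately have "q - v \<in> span (gen ` \<sigma>)" by (rule span_diff)
  then have "inverse (e / (2 * norm w)) *\<^sub>R (q - v) \<in> span (gen ` \<sigma>)" by (rule span_scale)
  then have "w \<in> span (gen ` \<sigma>)" using \<open>w \<noteq> 0\<close> \<open>e > 0\<close> by (simp add: q_def)
  then show False using w by blast
qed

lemma complex_gen_coeffs_exist:
  fixes b :: "'n \<Rightarrow> complex"
  assumes "\<sigma> \<in> \<Sigma>" "card \<sigma> = CARD('n)"
  obtains \<mu> where "\<And>k. (\<Sum>j\<in>\<sigma>. of_int (u j $ k) * \<mu> j) = b k"
proof -
  have "\<exists>c. axis k (1::real) = (\<Sum>j\<in>\<sigma>. c j *\<^sub>R gen j)" for k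
    using gen_coeffs_exist[OF assms] by blast
  then obtain C where C: "\<And>k. axis k (1::real) = (\<Sum>j\<in>\<sigma>. C k j *\<^sub>R gen j)"
    by metis
  have dual: "(\<Sum>j\<in>\<sigma>. C k j * real_of_int (u j $ k')) = (if k' = k then 1 else 0)" for k k'
    using arg_cong[OF C[of k], of "\<lambda>v. v $ k'"] by (simp add: sum_component rvec_def axis_def)
  define \<mu> where "\<mu> j = (\<Sum>k\<in>UNIV. b k * of_real (C k j))" for j
  have "(\<Sum>j\<in>\<sigma>. of_int (u j $ k') * \<mu> j) = b k'" for k'
  proof -
    have "(\<Sum>j\<in>\<sigma>. of_int (u j $ k') * \<mu> j)
        = (\<Sum>k\<in>UNIV. b k * of_real (\<Sum>j\<in>\<sigma>. C k j * real_of_int (u j $ k')))"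
      by (simp add: \<mu>_def sum_distrib_left sum_distrib_right mult_ac sum.swap[of _ \<sigma>])
    also have "\<dots> = (\<Sum>k\<in>UNIV. if k = k' then b k else 0)"
      by (rule sum.cong) (auto simp: dual)
    also have "\<dots> = b k'" by simp
    finally show ?thesis .
  qed
  then show ?thesis by (rule that)
qed

lemma cox_rel_if_same_zeros:
  assumes \<sigma>: "\<sigma> \<in> \<Sigma>" "card \<sigma> = CARD('n)"
    and out: "\<forall>j. j \<notin> {1..r} \<longrightarrow> x j = 0" "\<forall>j. j \<notin> {1..r} \<longrightarrow> y j = 0"
    and zeros: "\<forall>j\<in>{1..r}. x j = 0 \<longleftrightarrow> j \<in> \<sigma>" "\<forall>j\<in>{1..r}. y j = 0 \<longleftrightarrow> j \<in> \<sigma>"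
  shows "(x, y) \<in> cox_rel r u"
proof -
  define L where "L j = Ln (y j / x j)" for j
  obtain \<mu> where \<mu>: "\<And>k. (\<Sum>j\<in>\<sigma>. of_int (u j $ k) * \<mu> j) = - (\<Sum>j\<in>{1..r} - \<sigma>. of_int (u j $ k) * L j)"
    by (rule complex_gen_coeffs_exist[OF \<sigma>, where b = "\<lambda>k. - (\<Sum>j\<in>{1..r} - \<sigma>. of_int (u j $ k) * L j)"]) blast
  define \<nu> where "\<nu> j = (if j \<in> \<sigma> then \<mu> j else L j)" for j
  define t where "t j = (if j \<in> {1..r} then exp (\<nu> j) else 1)" for j
  have "(\<Sum>j\<in>{1..r}. of_int (u j $ k) * \<nu> j) = 0" for k
  proof -
    have "(\<Sum>j\<in>{1..r}. of_int (u j $ k) * \<nu> j)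
        = (\<Sum>j\<in>{1..r} - \<sigma>. of_int (u j $ k) * \<nu> j) + (\<Sum>j\<in>\<sigma>. of_int (u j $ k) * \<nu> j)"
      using sum.subset_diff[OF cone_subset[OF \<sigma>(1)]] by simp
    also have "\<dots> = (\<Sum>j\<in>{1..r} - \<sigma>. of_int (u j $ k) * L j) + (\<Sum>j\<in>\<sigma>. of_int (u j $ k) * \<mu> j)"
      by (simp add: \<nu>_def)
    finally show ?thesis using \<mu>[of k] by simp
  qed
  then have "t \<in> cox_group r u" unfolding t_def by (rule exp_in_cox_group)
  moreover have "y = (\<lambda>j. t j * x j)"
  proof
    fix j
    consider "j \<notin> {1..r}" | "j \<in> \<sigma>" | "j \<in> {1..r} - \<sigma>" by blast
    then show "y j = t j * x j"
    proof cases
      case 1 then show ?thesis using out by simp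
    next
      case 2
      then have "j \<in> {1..r}" using cone_subset[OF \<sigma>(1)] by blast
      then have "x j = 0" "y j = 0" using zeros 2 by blast+
      then show ?thesis by simp
    next
      case 3
      then have "x j \<noteq> 0" "y j \<noteq> 0" using zeros by blast+
      then show ?thesis using 3 by (simp add: t_def \<nu>_def L_def)
    qed
  qed
  ultimately show ?thesis unfolding cox_rel_def by blast
qed

lemma torus_orbit_maximal_cone:
  assumes "maximal_cone \<Sigma> \<sigma>"
  shows "\<exists>p. torus_orbit r u \<Sigma> \<sigma> = {p}"
proof -
  have \<sigma>: "\<sigma> \<in> \<Sigma>" "card \<sigma> = CARD('n)"
    using assms card_maximal_cone by (auto simp: maximal_cone_def)
  define x0 where "x0 j = (if j \<in> {1..r} - \<sigma> then 1 else (0::complex))" for j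
  have x0_out: "\<forall>j. j \<notin> {1..r} \<longrightarrow> x0 j = 0" and x0_zeros: "\<forall>j\<in>{1..r}. x0 j = 0 \<longleftrightarrow> j \<in> \<sigma>"
    by (simp_all add: x0_def)
  have "x0 \<in> cox_open r \<Sigma>" unfolding cox_open_def x0_def using \<sigma>(1) by auto
  then have p0: "cox_rel r u `` {x0} \<in> toric_variety r u \<Sigma>"
    unfolding toric_variety_def by (rule quotientI)
  have "torus_orbit r u \<Sigma> \<sigma> = {cox_rel r u `` {x0}}"
  proof (intro equalityI subsetI)
    fix p assume "p \<in> torus_orbit r u \<Sigma> \<sigma>"
    then obtain x where p: "p \<in> toric_variety r u \<Sigma>" "x \<in> p"
      and x_zeros: "\<forall>j\<in>{1..r}. x j = 0 \<longleftrightarrow> j \<in> \<sigma>"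
      unfolding torus_orbit_def by blast
    have "\<forall>j. j \<notin> {1..r} \<longrightarrow> x j = 0"
      using toric_variety_class(1)[OF p] by (simp add: cox_open_def)
    then have "(x, x0) \<in> cox_rel r u"
      using cox_rel_if_same_zeros[OF \<sigma>] x0_out x_zeros x0_zeros by blast
    then show "p \<in> {cox_rel r u `` {x0}}"
      using toric_variety_class(2)[OF p] equiv_class_eq[OF equiv_cox_rel] by simp
  next
    fix p assume "p \<in> {cox_rel r u `` {x0}}"
    moreover have "x0 \<in> cox_rel r u `` {x0}"
      using equiv_class_self[OF equiv_cox_rel] by simp
    ultimately show "p \<in> torus_orbit r u \<Sigma> \<sigma>"
      using p0 x0_zeros unfolding torus_orbit_def by blast
  qed
  then show ?thesis by blast
qed

lemma zero_set_in_fan: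
  assumes "y \<in> cox_open r \<Sigma>"
  shows "{j \<in> {1..r}. y j = 0} \<in> \<Sigma>"
proof -
  obtain \<sigma> where "\<sigma> \<in> \<Sigma>" "\<forall>j\<in>{1..r} - \<sigma>. y j \<noteq> 0"
    using assms unfolding cox_open_def by blast
  then have "{j \<in> {1..r}. y j = 0} \<subseteq> \<sigma>" by blast
  then show ?thesis using face_in_fan \<open>\<sigma> \<in> \<Sigma>\<close> by blast
qed

lemma torus_orbit_subset_Inter_zero_locus:
  assumes "\<sigma> \<in> \<Sigma>" "\<forall>i\<in>I. \<exists>j\<in>\<sigma>. a i j \<noteq> 0"
  shows "torus_orbit r u \<Sigma> \<sigma> \<subseteq> (\<Inter>i\<in>I. zero_locus r u \<Sigma> (a i))"
  using assms cone_subset torus_orbit_subset_zero_locus by (meson INT_greatest)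

lemma Inter_zero_locus_subset_orbits:
  fixes z :: "nat \<Rightarrow> nat \<Rightarrow> nat"
  assumes exponents: "\<forall>j\<in>{1..r}. (\<Sum>i\<in>{0..CARD('n)}. z i j) = 1"
  shows "(\<Inter>i\<in>{1..CARD('n)}. zero_locus r u \<Sigma> (z i))
    \<subseteq> (\<Union>\<sigma>\<in>{\<sigma>. maximal_cone \<Sigma> \<sigma> \<and> (\<forall>i\<in>{1..CARD('n)}. \<exists>j\<in>\<sigma>. z i j \<noteq> 0)}.
          torus_orbit r u \<Sigma> \<sigma>)"
proof
  fix p assume p: "p \<in> (\<Inter>i\<in>{1..CARD('n)}. zero_locus r u \<Sigma> (z i))"
  then have "p \<in> zero_locus r u \<Sigma> (z 1)" by (simp add: Suc_leI)
  then have pX: "p \<in> toric_variety r u \<Sigma>" by (simp add: zero_locus_def)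
  then obtain y where "p = cox_rel r u `` {y}"
    unfolding toric_variety_def by (rule quotientE)
  then have y: "y \<in> p" using equiv_class_self[OF equiv_cox_rel] by simp
  define Z where "Z = {j \<in> {1..r}. y j = 0}"
  have Z: "Z \<in> \<Sigma>" unfolding Z_def using zero_set_in_fan toric_variety_class(1)[OF pX y] .
  have hits: "\<forall>i\<in>{1..CARD('n)}. \<exists>j\<in>Z. z i j \<noteq> 0"
    using p zero_locus_iff[OF pX y] unfolding Z_def by blast
  have "CARD('n) \<le> card Z"
  proof -
    have "card {1..CARD('n)} \<le> card Z"
    proof (rule card_le_card_if_disjoint_hits[OF finite_cone[OF Z] hits])
      fix i i' j assume "i \<in> {1..CARD('n)}" "i' \<in> {1..CARD('n)}" "j \<in> Z" "z i j \<noteq> 0" "z i' j \<noteq> 0"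
      then show "i = i'"
        using exponents exponent_supports_disjoint[of z j "{0..CARD('n)}" i i']
        unfolding Z_def by auto
    qed
    then show ?thesis by simp
  qed
  then have "maximal_cone \<Sigma> Z" using maximal_cone_if_card Z by blast
  moreover have "p \<in> torus_orbit r u \<Sigma> Z"
    unfolding torus_orbit_def Z_def using pX y by blast
  ultimately show "p \<in> (\<Union>\<sigma>\<in>{\<sigma>. maximal_cone \<Sigma> \<sigma> \<and> (\<forall>i\<in>{1..CARD('n)}. \<exists>j\<in>\<sigma>. z i j \<noteq> 0)}.
          torus_orbit r u \<Sigma> \<sigma>)"
    using hits by blast
qed

end

theorem mainTheorem10:
  fixes u :: "nat \<Rightarrow> int^'n" and \<Sigma> :: "nat set set" and r :: nat
    and z :: "nat \<Rightarrow> nat \<Rightarrow> nat"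
  assumes fan: "complete_simplicial_fan r u \<Sigma>"
    and mono: "\<forall>i\<in>{0..CARD('n)}. \<forall>j. j \<notin> {1..r} \<longrightarrow> z i j = 0"
    and prod: "\<forall>j\<in>{1..r}. (\<Sum>i\<in>{0..CARD('n)}. z i j) = 1"
  shows "finite (\<Inter>i\<in>{1..CARD('n)}. zero_locus r u \<Sigma> (z i))
    \<and> (\<Inter>i\<in>{1..CARD('n)}. zero_locus r u \<Sigma> (z i)) =
        (\<Union>\<sigma>\<in>{\<sigma>. maximal_cone \<Sigma> \<sigma> \<and> (\<forall>i\<in>{1..CARD('n)}. \<exists>j\<in>\<sigma>. z i j \<noteq> 0)}.
            torus_orbit r u \<Sigma> \<sigma>)
    \<and> (\<forall>\<sigma>. maximal_cone \<Sigma> \<sigma> \<longrightarrow> (\<exists>p. torus_orbit r u \<Sigma> \<sigma> = {p}))"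
proof -
  interpret complete_fan r u \<Sigma> by (rule complete_fan.intro) (rule fan)
  let ?I = "\<Inter>i\<in>{1..CARD('n)}. zero_locus r u \<Sigma> (z i)"
  let ?M = "{\<sigma>. maximal_cone \<Sigma> \<sigma> \<and> (\<forall>i\<in>{1..CARD('n)}. \<exists>j\<in>\<sigma>. z i j \<noteq> 0)}"
  let ?U = "\<Union>\<sigma>\<in>?M. torus_orbit r u \<Sigma> \<sigma>"
  have eq: "?I = ?U"
  proof (rule equalityI)
    show "?I \<subseteq> ?U" by (rule Inter_zero_locus_subset_orbits[OF prod])
    show "?U \<subseteq> ?I"
      by (intro UN_least torus_orbit_subset_Inter_zero_locus) (auto simp: maximal_cone_def)
  qed
  have "?M \<subseteq> \<Sigma>" by (simp add: maximal_cone_def subset_eq)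
  then have "finite ?M" using finite_fan finite_subset by blast
  moreover have "finite (torus_orbit r u \<Sigma> \<sigma>)" if "\<sigma> \<in> ?M" for \<sigma>
    using torus_orbit_maximal_cone that by force
  ultimately have "finite ?U" by (rule finite_UN_I)
  then show ?thesis unfolding eq by (intro conjI allI impI refl torus_orbit_maximal_cone)
qed

end
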